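(* Let $n \geq 2$ and let $BH_n$ be the $n$-dimensional balanced hypercube. Let $S=\{s_1,\dots,s_{2n-2}\}\subseteq V_0$ and $T=\{t_1,\dots,t_{2n-2}\}\subseteq V_1$ be sets of $2n-2$ distinct vertices each. For $i\in\{0,1,2,3\}$ let $BH_{n-1}^i$ be the subgraph of $BH_n$ induced by the vertices whose $(n-1)$-dimensional index $a_{n-1}$ equals $i$, and put $S_i=V(BH_{n-1}^i)\cap S$, $T_i=V(BH_{n-1}^i)\cap T$, $D_i=|T_i|-|S_i|$, with all indices $i$ taken modulo $4$. Then there exists $i\in\{0,1,2,3\}$ such that $|S_i|\geq |T_i|$ and $|S_{i+1}|\leq |T_{i+1}|$, and furthermore $D_{i+1}+D_{i+2}\geq 0$.
   Context: The $n$-dimensional balanced hypercube $BH_n$ ($n\ge 1$) has vertex set $\{(a_0,a_1,\dots,a_{n-1}) : a_i\in\{0,1,2,3\}\}$ ($4^n$ vertices). A vertex $v=(a_0,\dots,a_{n-1})$ is adjacent to exactly the following $2n$ vertices: $((a_0\pm 1)\bmod 4, a_1,\dots,a_{n-1})$, and, for each $1\le i\le n-1$, $((a_0\pm1)\bmod 4, a_1,\dots,a_{i-1},(a_i+(-1)^{a_0})\bmod 4,a_{i+1},\dots,a_{n-1})$. The coordinate $a_0$ is the inner index and $a_i$ ($1\le i\le n-1$) is the $i$-dimensional index. $BH_n$ is bipartite with bipartition $V_0$ (vertices with even inner index) and $V_1$ (vertices with odd inner index). Each $BH_{n-1}^i$ is isomorphic to $BH_{n-1}$. *)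

theory Defs
  imports Main
begin

definition bh_verts :: "nat \<Rightarrow> nat list set" where
  "bh_verts n = {a. length a = n \<and> (\<forall>k<n. a ! k < 4)}"

definition bh_adj :: "nat \<Rightarrow> nat list \<Rightarrow> nat list \<Rightarrow> bool" where
  "bh_adj n u v \<longleftrightarrow> u \<in> bh_verts n \<and> v \<in> bh_verts n \<and>
     ((v ! 0 = (u ! 0 + 1) mod 4 \<or> v ! 0 = (u ! 0 + 3) mod 4) \<and>
      ((\<forall>k. 1 \<le> k \<and> k < n \<longrightarrow> v ! k = u ! k) \<or>
       (\<exists>i. 1 \<le> i \<and> i < n \<and>
          v ! i = (if even (u ! 0) then (u ! i + 1) mod 4 else (u ! i + 3) mod 4) \<and>
          (\<forall>k. 1 \<le> k \<and> k < n \<and> k \<noteq> i \<longrightarrow> v ! k = u ! k))))"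

definition bh_V0 :: "nat \<Rightarrow> nat list set" where
  "bh_V0 n = {a \<in> bh_verts n. even (a ! 0)}"

definition bh_V1 :: "nat \<Rightarrow> nat list set" where
  "bh_V1 n = {a \<in> bh_verts n. odd (a ! 0)}"

definition bh_sub :: "nat \<Rightarrow> nat \<Rightarrow> nat list set" where
  "bh_sub n i = {a \<in> bh_verts n. a ! (n - 1) = i}"

end

theory Submission
  imports Defs
begin

text \<open>Sum of the D_i is |T| - |S| = 0, so the statement reduces to a fact about four numbers on a
  cycle summing to zero: some index i has D_i \<le> 0 \<le> D_{i+1}, and if D_{i+1} + D_{i+2} < 0 for
  such an i then D_{i+3} + D_i = -(D_{i+1} + D_{i+2}) > 0 makes i + 2 an index of the required kind.\<close>

lemma cyclic_sign_change:
  fixes D :: "nat \<Rightarrow> int"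
  assumes "(\<Sum>i<4. D i) = 0"
  shows "\<exists>i<4. D i \<le> 0 \<and> 0 \<le> D ((i + 1) mod 4) \<and> 0 \<le> D ((i + 1) mod 4) + D ((i + 2) mod 4)"
proof -
  let ?P = "\<lambda>i. D i \<le> 0 \<and> 0 \<le> D ((i + 1) mod 4) \<and> 0 \<le> D ((i + 1) mod 4) + D ((i + 2) mod 4)"
  have cyclic_succ:
    "((0::nat) + 1) mod 4 = 1" "((1::nat) + 1) mod 4 = 2" "((2::nat) + 1) mod 4 = 3"
    "((3::nat) + 1) mod 4 = 0" "((0::nat) + 2) mod 4 = 2" "((1::nat) + 2) mod 4 = 3"
    "((2::nat) + 2) mod 4 = 0" "((3::nat) + 2) mod 4 = 1"
    by simp_all
  have "D 0 + D 1 + D 2 + D 3 = 0"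
    using assms by (simp add: lessThan_nat_numeral)
  then have "?P 0 \<or> ?P 1 \<or> ?P 2 \<or> ?P 3"
    by (simp only: cyclic_succ) arith
  then show ?thesis
    by force
qed

lemma bh_verts_eq_Union_bh_sub:
  assumes "n \<ge> 1"
  shows "bh_verts n = (\<Union>i<4. bh_sub n i)"
  using assms by (auto simp: bh_verts_def bh_sub_def)

lemma card_eq_sum_card_bh_sub:
  assumes "A \<subseteq> bh_verts n" "finite A" "n \<ge> 1"
  shows "card A = (\<Sum>i<4. card (bh_sub n i \<inter> A))"
proof -
  have "A = (\<Union>i<4. bh_sub n i \<inter> A)"
    using assms(1) bh_verts_eq_Union_bh_sub[OF assms(3)] by blast
  also have "card \<dots> = (\<Sum>i<4. card (bh_sub n i \<inter> A))"
    by (rule card_UN_disjoint) (use assms(2) in \<open>auto simp: bh_sub_def\<close>)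
  finally show ?thesis .
qed

theorem lemma7:
  fixes n :: nat and S T :: "nat list set"
  assumes "n \<ge> 2"
    and "S \<subseteq> bh_V0 n" and "card S = 2 * n - 2"
    and "T \<subseteq> bh_V1 n" and "card T = 2 * n - 2"
  shows "\<exists>i<4.
     card (bh_sub n i \<inter> S) \<ge> card (bh_sub n i \<inter> T) \<and>
     card (bh_sub n ((i + 1) mod 4) \<inter> S) \<le> card (bh_sub n ((i + 1) mod 4) \<inter> T) \<and>
     (int (card (bh_sub n ((i + 1) mod 4) \<inter> T)) - int (card (bh_sub n ((i + 1) mod 4) \<inter> S)))
   + (int (card (bh_sub n ((i + 2) mod 4) \<inter> T)) - int (card (bh_sub n ((i + 2) mod 4) \<inter> S))) \<ge> 0"
proof -
  define D where "D i = int (card (bh_sub n i \<inter> T)) - int (card (bh_sub n i \<inter> S))" for i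
  have "finite S" "finite T"
    using assms(1,3,5) by (simp_all add: card_ge_0_finite)
  moreover have "S \<subseteq> bh_verts n" "T \<subseteq> bh_verts n"
    using assms(2,4) by (auto simp: bh_V0_def bh_V1_def)
  ultimately have "(\<Sum>i<4. D i) = int (card T) - int (card S)"
    using card_eq_sum_card_bh_sub assms(1) by (simp add: D_def sum_subtractf)
  also have "\<dots> = 0"
    using assms(3,5) by simp
  finally obtain i where "i < 4" "D i \<le> 0" "0 \<le> D ((i + 1) mod 4)"
    "0 \<le> D ((i + 1) mod 4) + D ((i + 2) mod 4)"
    using cyclic_sign_change by blast
  then show ?thesis
    unfolding D_def by auto
qed

end
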